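(* Let $\lambda>0$, $m>0$, $n>0$, $\tan\theta=n/m$, and let $\varphi(\alpha,\beta)=\frac12(\alpha^2+2b\alpha\beta+a\beta^2)+c\alpha+d\beta$ be the conic through $X=(\lambda,0)$, $Y=(0,0)$, $Z=(m,n)$ satisfying (P1) $\varphi(X)=\varphi(Y)=\varphi(Z)=0$ and (P2) $Y-X$ is a positive multiple of $-\nabla\varphi(X)$ and $Z-Y$ is a positive multiple of $-\nabla\varphi(Y)$. Then the conic $\{\varphi=0\}$ is an ellipse if and only if $$0<m<\frac{4\lambda(1+\tan^2\theta)}{(\tan^2\theta+2)^2}.$$
   Context: The coefficients of such a conic are $b=\frac{n}{2m}$, $c=-\lambda/2$, $d=-b\lambda$, $a=\frac{(\lambda-m)(m^2+n^2)}{m n^2}$; the conic is an ellipse iff $a>b^2$. *)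

theory Defs
  imports Complex_Main
begin

definition phi :: "real \<Rightarrow> real \<Rightarrow> real \<Rightarrow> real \<Rightarrow> real \<Rightarrow> real \<Rightarrow> real" where
  "phi a b c d x y = (x^2 + 2*b*x*y + a*y^2) / 2 + c*x + d*y"

definition grad_phi :: "real \<Rightarrow> real \<Rightarrow> real \<Rightarrow> real \<Rightarrow> real \<Rightarrow> real \<Rightarrow> real \<times> real" where
  "grad_phi a b c d x y = (x + b*y + c, b*x + a*y + d)"

text \<open>Standard classification: the plane conic A x^2 + B x y + C y^2 + D x + E y + F = 0 is a
  (real, non-degenerate) ellipse iff its discriminant B^2 - 4AC is negative and its zero set
  contains at least two points (this excludes the degenerate empty and one-point cases).\<close>
definition is_ellipse :: "real \<Rightarrow> real \<Rightarrow> real \<Rightarrow> real \<Rightarrow> real \<Rightarrow> real \<Rightarrow> bool" where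
  "is_ellipse A B C D E F \<longleftrightarrow> B^2 - 4*A*C < 0 \<and>
     (\<exists>p q. p \<noteq> q \<and> A*(fst p)^2 + B*fst p*snd p + C*(snd p)^2 + D*fst p + E*snd p + F = 0
                  \<and> A*(fst q)^2 + B*fst q*snd q + C*(snd q)^2 + D*fst q + E*snd q + F = 0)"

definition phi_is_ellipse :: "real \<Rightarrow> real \<Rightarrow> real \<Rightarrow> real \<Rightarrow> bool" where
  "phi_is_ellipse a b c d \<longleftrightarrow> is_ellipse (1/2) b (a/2) c d 0"

end

theory Submission
  imports Defs
begin

text \<open>(P1) at X and (P2) at X and Y are linear in the coefficients and pin down c, d and b;
  (P1) at Z then determines a. Since the conic passes through the two distinct points
  X and Y, it is an ellipse exactly when its discriminant b^2 - a is negative, and with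
  T = tan \<theta> = n/m, b = T/2 and a = (\<lambda> - m)(1 + T^2)/(m T^2) this inequality clears to
  m (T^2 + 2)^2 < 4 \<lambda> (1 + T^2).\<close>

lemma phi_is_ellipse_iff_discriminant:
  assumes "phi a b c d x y = 0" and "phi a b c d x' y' = 0" and "(x, y) \<noteq> (x', y')"
  shows "phi_is_ellipse a b c d \<longleftrightarrow> b^2 < a"
proof -
  have general_form: "1/2*u^2 + b*u*v + a/2*v^2 + c*u + d*v + 0 = phi a b c d u v" for u v
    by (simp add: phi_def field_simps)
  have "phi_is_ellipse a b c d \<longleftrightarrow> b^2 < a \<and>
      (\<exists>p q. p \<noteq> q \<and> phi a b c d (fst p) (snd p) = 0 \<and> phi a b c d (fst q) (snd q) = 0)"
    unfolding phi_is_ellipse_def is_ellipse_def general_form by simp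
  moreover have "\<exists>p q. p \<noteq> q \<and> phi a b c d (fst p) (snd p) = 0 \<and> phi a b c d (fst q) (snd q) = 0"
    using assms by auto
  ultimately show ?thesis
    by blast
qed

lemma conic_coefficients:
  fixes lam m n a b c d s t :: real
  assumes "lam \<noteq> 0" and "m \<noteq> 0" and "n \<noteq> 0" and "t \<noteq> 0"
    and X: "phi a b c d lam 0 = 0" and Z: "phi a b c d m n = 0"
    and grad_X: "(- lam, 0) = (t * - fst (grad_phi a b c d lam 0), t * - snd (grad_phi a b c d lam 0))"
    and grad_Y: "(m, n) = (s * - fst (grad_phi a b c d 0 0), s * - snd (grad_phi a b c d 0 0))"
  shows "c = - lam / 2" and "d = - b * lam" and "b = n / (2 * m)"
    and "a = (lam - m) * (m^2 + n^2) / (m * n^2)"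
proof -
  have "lam * (lam / 2 + c) = 0"
    using X by (simp add: phi_def power2_eq_square algebra_simps)
  then show c: "c = - lam / 2"
    using \<open>lam \<noteq> 0\<close> by simp
  show d: "d = - b * lam"
    using grad_X \<open>t \<noteq> 0\<close> by (simp add: grad_phi_def)
  have "m = s * lam / 2" and "n = s * b * lam"
    using grad_Y c d by (simp_all add: grad_phi_def)
  then have "n = 2 * m * b"
    by simp
  then show b: "b = n / (2 * m)"
    using \<open>m \<noteq> 0\<close> by simp
  have "m^2 + 2*b*m*n + a*n^2 + 2*c*m + 2*d*n = 0"
    using Z by (simp add: phi_def field_simps)
  then show "a = (lam - m) * (m^2 + n^2) / (m * n^2)"
    using b c d \<open>m \<noteq> 0\<close> \<open>n \<noteq> 0\<close> by (simp add: field_simps power2_eq_square)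
qed

lemma discriminant_negative_iff_slope_bound:
  fixes T m lam :: real
  assumes "T \<noteq> 0" and "m > 0"
  shows "(T / 2)^2 < (lam - m) * (1 + T^2) / (m * T^2)
    \<longleftrightarrow> m < 4 * lam * (1 + T^2) / (T^2 + 2)^2"
proof -
  have pos: "4 * (m * T^2) > 0"
    using assms by simp
  have lhs: "(T / 2)^2 = T^4 * m / (4 * (m * T^2))"
    using assms by (simp add: power2_eq_square power4_eq_xxxx)
  have rhs: "(lam - m) * (1 + T^2) / (m * T^2) = 4 * ((lam - m) * (1 + T^2)) / (4 * (m * T^2))"
    by simp
  have "(T / 2)^2 < (lam - m) * (1 + T^2) / (m * T^2)
      \<longleftrightarrow> T^4 * m < 4 * ((lam - m) * (1 + T^2))"
    unfolding lhs rhs divide_less_cancel using pos by auto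
  also have "\<dots> \<longleftrightarrow> m * (T^2 + 2)^2 < 4 * lam * (1 + T^2)"
    by (simp add: power2_eq_square power4_eq_xxxx algebra_simps)
  also have "\<dots> \<longleftrightarrow> m < 4 * lam * (1 + T^2) / (T^2 + 2)^2"
  proof -
    have "T^2 + 2 > 0"
      by (simp add: add_nonneg_pos)
    then show ?thesis
      by (simp add: pos_less_divide_eq mult.commute)
  qed
  finally show ?thesis .
qed

theorem proposition2:
  fixes lam m n \<theta> a b c d :: real
  assumes "lam > 0" and "m > 0" and "n > 0"
    and "tan \<theta> = n / m"
    and P1: "phi a b c d lam 0 = 0" "phi a b c d 0 0 = 0" "phi a b c d m n = 0"
    and P2X: "\<exists>t>0. (0 - lam, 0 - 0) = (t * (- fst (grad_phi a b c d lam 0)), t * (- snd (grad_phi a b c d lam 0)))"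
    and P2Y: "\<exists>s>0. (m - 0, n - 0) = (s * (- fst (grad_phi a b c d 0 0)), s * (- snd (grad_phi a b c d 0 0)))"
  shows "phi_is_ellipse a b c d \<longleftrightarrow>
           0 < m \<and> m < 4 * lam * (1 + (tan \<theta>)^2) / ((tan \<theta>)^2 + 2)^2"
proof -
  obtain t s where "t > 0"
    and grad_X: "(- lam, 0) = (t * - fst (grad_phi a b c d lam 0), t * - snd (grad_phi a b c d lam 0))"
    and grad_Y: "(m, n) = (s * - fst (grad_phi a b c d 0 0), s * - snd (grad_phi a b c d 0 0))"
    using P2X P2Y by auto
  have "lam \<noteq> 0" "m \<noteq> 0" "n \<noteq> 0" "t \<noteq> 0"
    using \<open>lam > 0\<close> \<open>m > 0\<close> \<open>n > 0\<close> \<open>t > 0\<close> by simp_all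
  note coeffs = conic_coefficients[OF this P1(1,3) grad_X grad_Y]
  have b: "b = tan \<theta> / 2"
    using coeffs(3) \<open>tan \<theta> = n / m\<close> by simp
  have "(m^2 + n^2) / n^2 = (1 + (tan \<theta>)^2) / (tan \<theta>)^2"
    unfolding \<open>tan \<theta> = n / m\<close> using \<open>m > 0\<close> \<open>n > 0\<close> by (simp add: field_simps power2_eq_square)
  then have a: "a = (lam - m) * (1 + (tan \<theta>)^2) / (m * (tan \<theta>)^2)"
    using coeffs(4) by (metis times_divide_eq_right divide_divide_eq_left mult.commute)
  have "tan \<theta> \<noteq> 0"
    using \<open>tan \<theta> = n / m\<close> \<open>m > 0\<close> \<open>n > 0\<close> by simp
  have "phi_is_ellipse a b c d \<longleftrightarrow> b^2 < a"
    using phi_is_ellipse_iff_discriminant[OF P1(1,2)] \<open>lam > 0\<close> by simp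
  then show ?thesis
    unfolding a b using discriminant_negative_iff_slope_bound[OF \<open>tan \<theta> \<noteq> 0\<close> \<open>m > 0\<close>] \<open>m > 0\<close>
    by simp
qed

end
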